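(* Let $k\ge1$, let $M=\Gamma(\mathbb Z\,\overrightarrow{\times}\,G,(k,0))$ with $G$ a Dedekind $\sigma$-complete $\ell$-group, and let $F:\mathbb R^2\to M$ be a two-dimensional spectral resolution. Then for each $i\in\{1,\ldots,k\}$ with $T_i\neq\emptyset$, $T_i$ has at most $k-i+1$ characteristic points; consequently $F$ has at most $k(k+1)/2$ characteristic points.
   Context: $\mathbb Z\,\overrightarrow{\times}\,G$ is $\mathbb Z\times G$ with lexicographic order; $\Gamma(K,v)=([0,v];\oplus,',0,v)$ with $a\oplus b=(a+b)\wedge v$. A two-dimensional spectral resolution is $F:\mathbb R^2\to M$ such that: $F$ is monotone; $\bigvee_{(s,t)}F(s,t)=1$; $F(s,t)=\bigvee_{(s',t')\ll(s,t)}F(s',t')$; $\bigwedge_sF(s,t)=0=\bigwedge_tF(s,t)$; $0\le F(b_1,b_2)-F(a_1,b_2)-F(b_1,a_2)+F(a_1,a_2)\le1$ for $a_i\le b_i$ (in the group). $M_j=\{(j,g)\in M\}$, $T_j=\{(s,t)\colon F(s,t)\in M_j\}$. For $i\ge1$ and $(s,t)\in T_i$, $\pi_i(s,t)=(\inf\{r\colon(r,t)\in T_i\},\inf\{r\colon(s,r)\in T_i\})$; characteristic points of $T_i$ are the $\pi_i(s,t)$, $(s,t)\in T_i$; characteristic points of $F$ are those of the $T_i$, $i\ge1$. *)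

theory Defs
  imports Complex_Main "HOL-Library.Lattice_Algebras" "HOL-Library.Countable_Set"
begin

definition dedekind_sigma_complete :: "'g::lattice_ab_group_add itself \<Rightarrow> bool" where
  "dedekind_sigma_complete _ \<longleftrightarrow>
     (\<forall>S::'g set. countable S \<and> S \<noteq> {} \<and> bdd_above S \<longrightarrow>
        (\<exists>s. (\<forall>x\<in>S. x \<le> s) \<and> (\<forall>u. (\<forall>x\<in>S. x \<le> u) \<longrightarrow> s \<le> u)))"

definition lex_le :: "int \<times> 'g::lattice_ab_group_add \<Rightarrow> int \<times> 'g \<Rightarrow> bool" where
  "lex_le x y \<longleftrightarrow> fst x < fst y \<or> (fst x = fst y \<and> snd x \<le> snd y)"

definition lex_add :: "int \<times> 'g::lattice_ab_group_add \<Rightarrow> int \<times> 'g \<Rightarrow> int \<times> 'g" where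
  "lex_add x y = (fst x + fst y, snd x + snd y)"

definition lex_diff :: "int \<times> 'g::lattice_ab_group_add \<Rightarrow> int \<times> 'g \<Rightarrow> int \<times> 'g" where
  "lex_diff x y = (fst x - fst y, snd x - snd y)"

definition unitv :: "nat \<Rightarrow> int \<times> 'g::lattice_ab_group_add" where
  "unitv k = (int k, 0)"

definition GammaM :: "nat \<Rightarrow> (int \<times> 'g::lattice_ab_group_add) set" where
  "GammaM k = {x. lex_le (0, 0) x \<and> lex_le x (unitv k)}"

definition is_sup_M :: "nat \<Rightarrow> (int \<times> 'g::lattice_ab_group_add) set \<Rightarrow> int \<times> 'g \<Rightarrow> bool" where
  "is_sup_M k S x \<longleftrightarrow> x \<in> GammaM k \<and> (\<forall>y\<in>S. lex_le y x) \<and>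
      (\<forall>z\<in>GammaM k. (\<forall>y\<in>S. lex_le y z) \<longrightarrow> lex_le x z)"

definition is_inf_M :: "nat \<Rightarrow> (int \<times> 'g::lattice_ab_group_add) set \<Rightarrow> int \<times> 'g \<Rightarrow> bool" where
  "is_inf_M k S x \<longleftrightarrow> x \<in> GammaM k \<and> (\<forall>y\<in>S. lex_le x y) \<and>
      (\<forall>z\<in>GammaM k. (\<forall>y\<in>S. lex_le z y) \<longrightarrow> lex_le z x)"

definition spectral_resolution2 :: "nat \<Rightarrow> (real \<Rightarrow> real \<Rightarrow> int \<times> 'g::lattice_ab_group_add) \<Rightarrow> bool" where
  "spectral_resolution2 k F \<longleftrightarrow>
     (\<forall>s t. F s t \<in> GammaM k) \<and>
     (\<forall>s t s' t'. s \<le> s' \<and> t \<le> t' \<longrightarrow> lex_le (F s t) (F s' t')) \<and>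
     is_sup_M k {F s t | s t. True} (unitv k) \<and>
     (\<forall>s t. is_sup_M k {F s' t' | s' t'. s' < s \<and> t' < t} (F s t)) \<and>
     (\<forall>t. is_inf_M k {F s t | s. True} (0, 0)) \<and>
     (\<forall>s. is_inf_M k {F s t | t. True} (0, 0)) \<and>
     (\<forall>a1 a2 b1 b2. a1 \<le> b1 \<and> a2 \<le> b2 \<longrightarrow>
        (let D = lex_add (lex_diff (lex_diff (F b1 b2) (F a1 b2)) (F b1 a2)) (F a1 a2)
         in lex_le (0, 0) D \<and> lex_le D (unitv k)))"

(* T_j = {(s,t). F(s,t) \<in> M_j} *)
definition Tset :: "(real \<Rightarrow> real \<Rightarrow> int \<times> 'g) \<Rightarrow> int \<Rightarrow> (real \<times> real) set" where
  "Tset F j = {(s, t). fst (F s t) = j}"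

definition proj_pi :: "(real \<Rightarrow> real \<Rightarrow> int \<times> 'g) \<Rightarrow> int \<Rightarrow> real \<times> real \<Rightarrow> real \<times> real" where
  "proj_pi F i p = (Inf {r. (r, snd p) \<in> Tset F i}, Inf {r. (fst p, r) \<in> Tset F i})"

definition char_points_T :: "(real \<Rightarrow> real \<Rightarrow> int \<times> 'g) \<Rightarrow> int \<Rightarrow> (real \<times> real) set" where
  "char_points_T F i = proj_pi F i ` Tset F i"

definition char_points :: "(real \<Rightarrow> real \<Rightarrow> int \<times> 'g) \<Rightarrow> (real \<times> real) set" where
  "char_points F = (\<Union>i\<in>{i. i \<ge> 1}. char_points_T F i)"

end

(* The integer part f = fst o F is monotone, 2-increasing and grounded, with values in {0..k}.
   On a level set T_i (i >= 1) two comparable points have the same projection pi_i, because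
   2-increasingness makes f constant along the rows and columns below them; so points of T_i with
   distinct projections form an antichain. Listed by increasing first coordinate, each point of
   the antichain raises f by at least 1 at the common height max t, so n such points force a value
   of at least i + n - 1, while f <= k. Summing k - i + 1 over i = 1..k gives k(k+1)/2. *)
theory Submission
  imports Defs
begin

lemma cInf_inter_atMost:
  fixes X :: "'a::conditionally_complete_linorder set"
  assumes "s \<in> X" "bdd_below X"
  shows "Inf (X \<inter> {..s}) = Inf X"
proof (rule antisym)
  show "Inf (X \<inter> {..s}) \<le> Inf X"
  proof (rule cInf_greatest)
    fix y assume "y \<in> X"
    show "Inf (X \<inter> {..s}) \<le> y"
    proof (cases "y \<le> s")
      case True
      then show ?thesis using \<open>y \<in> X\<close> assms(2) by (intro cInf_lower) (auto intro: bdd_below_mono)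
    next
      case False
      have "Inf (X \<inter> {..s}) \<le> s" using assms by (intro cInf_lower) (auto intro: bdd_below_mono)
      then show ?thesis using False by simp
    qed
  qed (use assms in auto)
  show "Inf X \<le> Inf (X \<inter> {..s})"
    using assms by (intro cInf_superset_mono) auto
qed

locale grounded_two_increasing =
  fixes f :: "real \<Rightarrow> real \<Rightarrow> int"
  assumes mono: "s \<le> s' \<Longrightarrow> t \<le> t' \<Longrightarrow> f s t \<le> f s' t'"
    and two_increasing: "a1 \<le> b1 \<Longrightarrow> a2 \<le> b2 \<Longrightarrow> f a1 b2 + f b1 a2 \<le> f b1 b2 + f a1 a2"
    and grounded_row: "\<exists>s. f s t \<le> 0"
    and grounded_col: "\<exists>t. f s t \<le> 0"
begin

definition level :: "int \<Rightarrow> (real \<times> real) set" where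
  "level i = {(s, t). f s t = i}"

definition proj :: "int \<Rightarrow> real \<times> real \<Rightarrow> real \<times> real" where
  "proj i p = (Inf {r. f r (snd p) = i}, Inf {r. f (fst p) r = i})"

lemma mem_level_iff [simp]: "p \<in> level i \<longleftrightarrow> f (fst p) (snd p) = i"
  by (cases p) (simp add: level_def)

lemma transpose: "grounded_two_increasing (\<lambda>s t. f t s)"
  by unfold_locales (auto intro: mono grounded_row grounded_col dest: two_increasing)

lemma bdd_below_row_level:
  assumes "i \<ge> 1"
  shows "bdd_below {r. f r t = i}"
proof -
  obtain r0 where r0: "f r0 t \<le> 0" using grounded_row by blast
  have "r0 \<le> r" if "f r t = i" for r
    using mono[of r r0 t t] r0 that assms by (cases "r0 \<le> r") auto
  then show ?thesis by (intro bdd_belowI[of _ r0]) auto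
qed

lemma row_Inf_eq:
  assumes "i \<ge> 1" "f s t = i" "f s t' = i" "t \<le> t'"
  shows "Inf {r. f r t = i} = Inf {r. f r t' = i}"
proof -
  have "f r t = f r t'" if "r \<le> s" for r
    using mono[of r r t t'] two_increasing[of r s t t'] that assms by simp
  then have "{r. f r t = i} \<inter> {..s} = {r. f r t' = i} \<inter> {..s}" by auto
  then show ?thesis
    using cInf_inter_atMost[of s "{r. f r t = i}"] cInf_inter_atMost[of s "{r. f r t' = i}"]
      bdd_below_row_level assms by simp
qed

lemma proj_eq_if_le:
  assumes "i \<ge> 1" "p \<in> level i" "q \<in> level i" "fst p \<le> fst q" "snd p \<le> snd q"
  shows "proj i p = proj i q"
proof -
  have corner: "f (fst p) (snd q) = i"
    using mono[of "fst p" "fst p" "snd p" "snd q"] mono[of "fst p" "fst q" "snd q" "snd q"] assms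
    by auto
  have "Inf {r. f r (snd p) = i} = Inf {r. f r (snd q) = i}"
    using row_Inf_eq[OF \<open>i \<ge> 1\<close> _ corner] assms by auto
  moreover have "Inf {r. f (fst p) r = i} = Inf {r. f (fst q) r = i}"
    using grounded_two_increasing.row_Inf_eq[OF transpose \<open>i \<ge> 1\<close> corner] assms
    by auto
  ultimately show ?thesis by (simp add: proj_def)
qed

lemma incomparable_if_proj_ne:
  assumes "i \<ge> 1" "p \<in> level i" "q \<in> level i" "proj i p \<noteq> proj i q" "fst q \<le> fst p"
  shows "fst q < fst p \<and> snd p < snd q"
proof -
  have "\<not> snd q \<le> snd p"
    using proj_eq_if_le[of i q p] assms(1-5) by metis
  moreover have "fst q \<noteq> fst p"
    using proj_eq_if_le[of i p q] assms(1-4) calculation by fastforce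
  ultimately show ?thesis using assms(5) by auto
qed

lemma less_across_level_if_proj_ne:
  assumes "i \<ge> 1" "p \<in> level i" "q \<in> level i" "proj i p \<noteq> proj i q" "fst q \<le> fst p"
    and "snd q \<le> T"
  shows "f (fst q) T < f (fst p) T"
proof -
  have ordered: "fst q < fst p" "snd p < snd q"
    using incomparable_if_proj_ne assms by auto
  have fp: "f (fst p) (snd p) = i" using assms(2) by simp
  have "f (fst q) (snd p) \<noteq> i"
  proof
    assume "f (fst q) (snd p) = i"
    then have "(fst q, snd p) \<in> level i" by simp
    then have "proj i p = proj i (fst q, snd p)" "proj i (fst q, snd p) = proj i q"
      using proj_eq_if_le[of i "(fst q, snd p)" p] proj_eq_if_le[of i "(fst q, snd p)" q]
        assms ordered by auto
    with assms(4) show False by simp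
  qed
  moreover have "f (fst q) (snd p) \<le> i"
    using mono[of "fst q" "fst p" "snd p" "snd p"] ordered fp by simp
  moreover have "f (fst q) T + f (fst p) (snd p) \<le> f (fst p) T + f (fst q) (snd p)"
    using two_increasing ordered assms(6) by simp
  ultimately show ?thesis using fp by linarith
qed

lemma card_antichain_le_corner_value:
  assumes "i \<ge> 1" "finite R" "R \<noteq> {}" "R \<subseteq> level i" "inj_on (proj i) R"
  shows "i + int (card R) - 1 \<le> f (Max (fst ` R)) (Max (snd ` R))"
  using assms(2-)
proof (induction R rule: finite_ranking_induct[where f = fst])
  case empty
  then show ?case by simp
next
  case (insert p S)
  show ?case
  proof (cases "S = {} \<or> p \<in> S")
    case True
    then show ?thesis
    proof
      assume "S = {}"
      then show ?thesis using insert by simp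
    next
      assume "p \<in> S"
      then show ?thesis using insert by (simp add: insert_absorb)
    qed
  next
    case False
    have "Max (fst ` S) \<in> fst ` S" using False insert.hyps(1) by (intro Max_in) auto
    then obtain q where q: "q \<in> S" "fst q = Max (fst ` S)" by force
    define T where "T = Max (snd ` S)"
    have qT: "snd q \<le> T" using q insert.hyps(1) by (simp add: T_def)
    have pq: "p \<in> level i" "q \<in> level i" "proj i p \<noteq> proj i q" "fst q \<le> fst p"
      using insert q False by (auto simp: inj_on_def)
    have "snd p < T" using incomparable_if_proj_ne[OF assms(1) pq] qT by simp
    then have "Max (snd ` insert p S) = T"
      using False insert.hyps(1) by (simp add: T_def max_def)
    moreover have "Max (fst ` insert p S) = fst p"
      using False insert.hyps by (auto intro: Max_eqI)
    moreover have "i + int (card S) - 1 \<le> f (fst q) T"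
      using insert False q by (auto simp: T_def intro: inj_on_subset)
    moreover have "f (fst q) T < f (fst p) T"
      using less_across_level_if_proj_ne[OF assms(1) pq qT] .
    ultimately show ?thesis using False insert.hyps(1) by simp
  qed
qed

lemma finite_card_proj_level:
  assumes "i \<ge> 1" and bounded: "\<And>s t. f s t \<le> k"
  shows "finite (proj i ` level i) \<and> card (proj i ` level i) \<le> nat (k - i + 1)"
proof (rule finite_if_finite_subsets_card_bdd)
  fix S assume S: "S \<subseteq> proj i ` level i" "finite S"
  then obtain R where R: "R \<subseteq> level i" "inj_on (proj i) R" "S = proj i ` R"
    by (auto simp: subset_image_inj)
  then have "finite R" "card R = card S" using S(2) by (auto simp: finite_image_iff card_image)
  show "card S \<le> nat (k - i + 1)"
  proof (cases "R = {}")
    case True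
    then show ?thesis using R by simp
  next
    case False
    have "i + int (card R) - 1 \<le> f (Max (fst ` R)) (Max (snd ` R))"
      using card_antichain_le_corner_value[OF assms(1) \<open>finite R\<close> False R(1,2)] .
    also have "\<dots> \<le> k" by (rule bounded)
    finally show ?thesis using \<open>card R = card S\<close> by linarith
  qed
qed

end

lemma eq_0_if_nonneg_le_0:
  fixes x :: "'g::lattice_ab_group_add"
  assumes "\<And>h::'g. 0 \<le> h \<Longrightarrow> h \<le> 0"
  shows "x = 0"
proof -
  have "sup y 0 \<le> 0" for y :: 'g by (rule assms) simp
  then have "x \<le> 0" "- x \<le> 0" by (meson order_trans sup_ge1)+
  then show ?thesis by simp
qed

lemma GammaM_fst_bounds: "x \<in> GammaM k \<Longrightarrow> 0 \<le> fst x \<and> fst x \<le> int k"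
  by (auto simp: GammaM_def lex_le_def unitv_def)

lemma ex_fst_0_if_is_inf_M_0:
  fixes g :: "'a \<Rightarrow> int \<times> 'g::lattice_ab_group_add"
  assumes "k \<ge> 1" "\<And>x. g x \<in> GammaM k" "is_inf_M k {g x | x. True} (0, 0)"
  shows "\<exists>x. fst (g x) = 0"
proof (rule ccontr)
  assume "\<nexists>x. fst (g x) = 0"
  have pos: "1 \<le> fst (g x)" for x
  proof -
    have "0 \<le> fst (g x)" "fst (g x) \<noteq> 0"
      using GammaM_fst_bounds[OF assms(2)] \<open>\<nexists>x. fst (g x) = 0\<close> by auto
    then show ?thesis by linarith
  qed
  have lower_le_0: "lex_le z (0, 0)" if "z \<in> GammaM k" "\<And>x. lex_le z (g x)" for z
    using assms(3) that unfolding is_inf_M_def by blast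
  \<comment> \<open>Every \<open>(0, h)\<close> with \<open>h \<ge> 0\<close> is a lower bound, so \<open>G\<close> is trivial;
    but then \<open>(1, 0)\<close> is a lower bound too.\<close>
  have "h \<le> 0" if "0 \<le> h" for h :: 'g
  proof -
    have "(0, h) \<in> GammaM k" using assms(1) that by (simp add: GammaM_def lex_le_def unitv_def)
    moreover have "lex_le (0, h) (g x)" for x using pos[of x] by (simp add: lex_le_def)
    ultimately have "lex_le (0, h) (0, 0)" by (rule lower_le_0)
    then show ?thesis by (simp add: lex_le_def)
  qed
  then have "snd (g x) = 0" for x by (rule eq_0_if_nonneg_le_0)
  then have "lex_le (1, 0) (g x)" for x using pos[of x] by (auto simp: lex_le_def)
  moreover have "(1, 0) \<in> GammaM k" using assms(1) by (auto simp: GammaM_def lex_le_def unitv_def)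
  ultimately have "lex_le (1, 0) (0::int, 0::'g)" using lower_le_0 by blast
  then show False by (simp add: lex_le_def)
qed

lemma spectral_resolution2_fst_grounded_two_increasing:
  assumes "k \<ge> 1" "spectral_resolution2 k F"
  shows "grounded_two_increasing (\<lambda>s t. fst (F s t))"
proof
  fix s t s' t' :: real
  assume "s \<le> s'" "t \<le> t'"
  then have "lex_le (F s t) (F s' t')" using assms(2) by (simp add: spectral_resolution2_def)
  then show "fst (F s t) \<le> fst (F s' t')" by (auto simp: lex_le_def)
next
  fix a1 a2 b1 b2 :: real
  assume "a1 \<le> b1" "a2 \<le> b2"
  then have "lex_le (0, 0) (lex_add (lex_diff (lex_diff (F b1 b2) (F a1 b2)) (F b1 a2)) (F a1 a2))"
    using assms(2) unfolding spectral_resolution2_def Let_def by blast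
  then show "fst (F a1 b2) + fst (F b1 a2) \<le> fst (F b1 b2) + fst (F a1 a2)"
    by (auto simp: lex_le_def lex_add_def lex_diff_def)
next
  fix t :: real
  obtain s where "fst (F s t) = 0"
    using ex_fst_0_if_is_inf_M_0[OF assms(1), of "\<lambda>s. F s t"] assms(2)
    by (auto simp: spectral_resolution2_def)
  then show "\<exists>s. fst (F s t) \<le> 0" by (intro exI[of _ s]) simp
next
  fix s :: real
  obtain t where "fst (F s t) = 0"
    using ex_fst_0_if_is_inf_M_0[OF assms(1), of "F s"] assms(2)
    by (auto simp: spectral_resolution2_def)
  then show "\<exists>t. fst (F s t) \<le> 0" by (intro exI[of _ t]) simp
qed

lemma sum_Icc_int_reversed: "(\<Sum>i\<in>{1..int k}. nat (int k - i + 1)) = k * (k + 1) div 2"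
proof -
  have "(\<Sum>i\<in>{1..int k}. nat (int k - i + 1)) = (\<Sum>j\<in>{1..k}. j)"
    by (rule sum.reindex_bij_witness[of _ "\<lambda>j. int k - int j + 1" "\<lambda>i. nat (int k - i + 1)"]) auto
  also have "\<dots> = k * (k + 1) div 2"
    using gauss_sum_from_Suc_0[where 'a = nat, of k] by simp
  finally show ?thesis .
qed

theorem theorem4p10:
  fixes k :: nat and F :: "real \<Rightarrow> real \<Rightarrow> int \<times> 'g::lattice_ab_group_add"
  assumes "k \<ge> 1"
    and "dedekind_sigma_complete TYPE('g)"
    and "spectral_resolution2 k F"
  shows "(\<forall>i::int. 1 \<le> i \<and> i \<le> int k \<and> Tset F i \<noteq> {} \<longrightarrow>
            finite (char_points_T F i) \<and> card (char_points_T F i) \<le> nat (int k - i + 1))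
         \<and> finite (char_points F) \<and> card (char_points F) \<le> k * (k + 1) div 2"
proof -
  interpret F: grounded_two_increasing "\<lambda>s t. fst (F s t)"
    using spectral_resolution2_fst_grounded_two_increasing assms(1,3) .
  have bounds: "0 \<le> fst (F s t) \<and> fst (F s t) \<le> int k" for s t
    using assms(3) GammaM_fst_bounds[of "F s t" k] by (simp add: spectral_resolution2_def)
  have char_points_T_eq: "char_points_T F i = F.proj i ` F.level i" for i
    by (simp add: char_points_T_def Tset_def proj_pi_def F.proj_def F.level_def)
  have levels: "finite (char_points_T F i) \<and> card (char_points_T F i) \<le> nat (int k - i + 1)"
    if "1 \<le> i" for i
    unfolding char_points_T_eq using F.finite_card_proj_level[OF that] bounds by blast
  have "F.level i = {}" if "i > int k" for i
    using bounds that by (force simp: F.level_def not_less[symmetric])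
  moreover have "{i. 1 \<le> i} = {1..int k} \<union> {int k<..}" by auto
  ultimately have char_points_eq: "char_points F = (\<Union>i\<in>{1..int k}. char_points_T F i)"
    unfolding char_points_def char_points_T_eq by auto
  have "card (char_points F) \<le> (\<Sum>i\<in>{1..int k}. card (char_points_T F i))"
    unfolding char_points_eq by (rule card_UN_le) simp
  also have "\<dots> \<le> (\<Sum>i\<in>{1..int k}. nat (int k - i + 1))"
    using levels by (intro sum_mono) simp
  finally show ?thesis
    using levels sum_Icc_int_reversed[of k] by (simp add: char_points_eq)
qed

end
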